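(* Let $T\in\mathbb{N}$, let $\beta_1,\dots,\beta_T\in(0,1)$, set $\alpha_t=1-\beta_t$ and $\bar\alpha_t=\prod_{i=1}^t\alpha_i$, and let $\sigma_t\ge 0$ be such that $1-\bar\alpha_{t-1}-\sigma_t^2\ge 0$. Fix $t\in\{2,\dots,T\}$ and $\bm x_t\in\mathbb{R}^d$. For $\bm x_0\in\mathbb{R}^d$ let $$p(\bm x_{t-1}\mid \bm x_t,\bm x_0)=\mathcal{N}\Big(\bm x_{t-1};\ \sqrt{\bar\alpha_{t-1}}\,\bm x_0+\sqrt{1-\bar\alpha_{t-1}-\sigma_t^2}\,\tfrac{\bm x_t-\sqrt{\bar\alpha_t}\,\bm x_0}{\sqrt{1-\bar\alpha_t}},\ \sigma_t^2\mathbf{I}\Big).$$ Let the noise distribution be the Gaussian mixture $$p_\theta^\epsilon(\epsilon_t\mid \bm x_t)=\sum_{k=1}^K\pi_{\theta,k}\,\mathcal{N}\big(\epsilon_t;\bm\mu^\epsilon_{\theta,k}(\bm x_t,t),\bm\Sigma^\epsilon_{\theta,k}(\bm x_t,t)\big),$$ with $\pi_{\theta,k}\in[0,1]$, $\sum_k\pi_{\theta,k}=1$, means $\bm\mu^\epsilon_{\theta,k}(\bm x_t,t)\in\mathbb{R}^d$ and positive (semi-)definite covariances $\bm\Sigma^\epsilon_{\theta,k}(\bm x_t,t)$. Define the reverse distribution $$p_\theta(\bm x_{t-1}\mid\bm x_t)=\int_{\mathbb{R}^d} p\Big(\bm x_{t-1}\,\Big|\,\bm x_t,\ \bm x_0=\tfrac{\bm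 x_t-\sqrt{1-\bar\alpha_t}\,\epsilon_t}{\sqrt{\bar\alpha_t}}\Big)\,p_\theta^\epsilon(\epsilon_t\mid\bm x_t)\,d\epsilon_t .$$ Then $$p_\theta(\bm x_{t-1}\mid\bm x_t)=\sum_{k=1}^K\pi_{\theta,k}\,\mathcal{N}\Big(\bm x_{t-1};\ \sqrt{\bar\alpha_{t-1}}\,\hat{\bm x}_{0,k}+\lambda_t\,\bm\mu^\epsilon_{\theta,k}(\bm x_t,t),\ \gamma_t^2\,\bm\Sigma^\epsilon_{\theta,k}(\bm x_t,t)+\sigma_t^2\mathbf{I}\Big),$$ where $\hat{\bm x}_{0,k}=\frac{\bm x_t-\sqrt{1-\bar\alpha_t}\,\bm\mu^\epsilon_{\theta,k}(\bm x_t,t)}{\sqrt{\bar\alpha_t}}$, $\lambda_t=\sqrt{1-\bar\alpha_{t-1}-\sigma_t^2}$ and $\gamma_t=\lambda_t-\frac{\sqrt{1-\bar\alpha_t}}{\sqrt{\alpha_t}}$.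
   Context: This is the DDIM (denoising diffusion implicit model) framework: the forward noising satisfies $\bm x_t=\sqrt{\bar\alpha_t}\bm x_0+\sqrt{1-\bar\alpha_t}\,\epsilon_t$, so conditioning on $\bm x_0$ is equivalent to conditioning on the noise $\epsilon_t=(\bm x_t-\sqrt{\bar\alpha_t}\bm x_0)/\sqrt{1-\bar\alpha_t}$. The distribution $p_\theta^\epsilon(\cdot\mid\bm x_t)$ is a learned (neural-network-parametrized) model of the distribution of $\epsilon_t$ given $\bm x_t$. *)

theory Defs
  imports "HOL-Probability.Probability"
begin

definition alpha :: "(nat \<Rightarrow> real) \<Rightarrow> nat \<Rightarrow> real" where
  "alpha \<beta> t = 1 - \<beta> t"

definition alpha_bar :: "(nat \<Rightarrow> real) \<Rightarrow> nat \<Rightarrow> real" where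
  "alpha_bar \<beta> t = (\<Prod>i=1..t. alpha \<beta> i)"

definition psd :: "real^'n^'n \<Rightarrow> bool" where
  "psd S \<longleftrightarrow> transpose S = S \<and> (\<forall>v. 0 \<le> v \<bullet> (S *v v))"

definition std_gauss_vec :: "(real^'n) measure" where
  "std_gauss_vec = distr (PiM UNIV (\<lambda>_::'n. density lborel std_normal_density)) borel
      (\<lambda>f. \<chi> i. f i)"

text \<open>Gaussian measure N(mu, S) on R^n for a PSD covariance S (possibly degenerate):
  the law of mu + A z with z standard Gaussian and A A^T = S.\<close>
definition gauss_vec :: "real^'n \<Rightarrow> real^'n^'n \<Rightarrow> (real^'n) measure" where
  "gauss_vec m S = distr std_gauss_vec borel
      (\<lambda>z. m + (SOME A :: real^'n^'n. A ** transpose A = S) *v z)"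

definition mixture :: "nat \<Rightarrow> (nat \<Rightarrow> real) \<Rightarrow> (nat \<Rightarrow> (real^'n) measure) \<Rightarrow> (real^'n) measure" where
  "mixture K \<pi> M = measure_of UNIV (sets borel)
      (\<lambda>A. \<Sum>k=1..K. ennreal (\<pi> k) * emeasure (M k) A)"

definition ddim_cond :: "(nat \<Rightarrow> real) \<Rightarrow> (nat \<Rightarrow> real) \<Rightarrow> nat \<Rightarrow> real^'n \<Rightarrow> real^'n
    \<Rightarrow> (real^'n) measure" where
  "ddim_cond \<beta> \<sigma> t xt x0 = gauss_vec
      (sqrt (alpha_bar \<beta> (t-1)) *\<^sub>R x0
        + sqrt (1 - alpha_bar \<beta> (t-1) - (\<sigma> t)\<^sup>2)
            *\<^sub>R ((1 / sqrt (1 - alpha_bar \<beta> t)) *\<^sub>R (xt - sqrt (alpha_bar \<beta> t) *\<^sub>R x0)))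
      ((\<sigma> t)\<^sup>2 *\<^sub>R mat 1)"

end

theory Submission
  imports Defs
begin

(* Conditionally on the noise eps, the reverse step is Gaussian with covariance sigma_t^2 I and
   mean m + gamma_t eps, which is affine in eps. Integrating it against a mixture component
   eps ~ N(mu_k, Sigma_k) therefore gives the law of m + gamma_t (mu_k + A z) + sigma_t w for
   independent standard Gaussian vectors z, w, i.e. of an affine image of one standard Gaussian
   vector. Such a law depends only on the covariance gamma_t^2 Sigma_k + sigma_t^2 I: two linear
   maps with the same covariance differ by an orthogonal map, and the standard Gaussian measure is
   invariant under orthogonal maps (by the change of variables formula for Lebesgue measure).
   Since integrating a kernel against a mixture is linear in the mixture, the weights pass
   through unchanged. *)

section \<open>Square roots of positive semidefinite matrices\<close>

lemma selfadjoint_eigenvector_of_max: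
  fixes s :: "'a::euclidean_space \<Rightarrow> 'a"
  assumes lin: "linear s" and sym: "\<And>x y. s x \<bullet> y = x \<bullet> s y"
    and V: "subspace V" and inv: "s ` V \<subseteq> V" and uV: "u \<in> V"
    and max: "\<And>x. x \<in> V \<Longrightarrow> x \<bullet> s x \<le> lam * (x \<bullet> x)"
    and ueq: "u \<bullet> s u = lam * (u \<bullet> u)"
  shows "s u = lam *\<^sub>R u"
proof (rule ccontr)
  define p where "p = lam *\<^sub>R u - s u"
  define c where "c = p \<bullet> s p - lam * (p \<bullet> p)"
  assume "s u \<noteq> lam *\<^sub>R u"
  then have pp: "p \<bullet> p > 0" unfolding p_def by simp
  have pV: "p \<in> V" unfolding p_def using uV inv V
    by (meson image_subset_iff subspace_diff subspace_scale)
  \<comment> \<open>The Rayleigh quotient would increase along p.\<close>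
  have quadratic: "- 2 * e * (p \<bullet> p) + e\<^sup>2 * c \<le> 0" for e
  proof -
    have "u + e *\<^sub>R p \<in> V" using uV pV V by (simp add: subspace_add subspace_scale)
    from max[OF this] have "(u + e *\<^sub>R p) \<bullet> s (u + e *\<^sub>R p) \<le> lam * ((u + e *\<^sub>R p) \<bullet> (u + e *\<^sub>R p))" .
    moreover have "s (u + e *\<^sub>R p) = s u + e *\<^sub>R s p" using lin by (simp add: linear_add linear_scale)
    moreover have "u \<bullet> s p = p \<bullet> s u" using sym[of p u] by (simp add: inner_commute)
    moreover have "p \<bullet> s u = lam * (p \<bullet> u) - p \<bullet> p"
      unfolding p_def by (simp add: inner_diff_left inner_diff_right inner_commute algebra_simps)
    ultimately show ?thesis using ueq unfolding c_def
      by (simp add: inner_add_left inner_add_right algebra_simps power2_eq_square inner_commute)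
  qed
  define e where "e = (p \<bullet> p) / (\<bar>c\<bar> + 1)"
  have e: "e > 0" and "e * \<bar>c\<bar> < p \<bullet> p"
    using pp by (auto simp: e_def field_simps)
  then have "e\<^sup>2 * \<bar>c\<bar> < e * (p \<bullet> p)"
    by (simp add: power2_eq_square)
  moreover have "- (e\<^sup>2 * \<bar>c\<bar>) \<le> e\<^sup>2 * c"
    using mult_left_mono[OF abs_ge_minus_self[of c], of "e\<^sup>2"] by simp
  ultimately show False
    using quadratic[of "-e"] mult_pos_pos[OF e pp] by simp
qed

lemma selfadjoint_unit_eigenvector_in_subspace:
  fixes s :: "'a::euclidean_space \<Rightarrow> 'a"
  assumes lin: "linear s" and sym: "\<And>x y. s x \<bullet> y = x \<bullet> s y"
    and V: "subspace V" and inv: "s ` V \<subseteq> V" and nontriv: "V \<noteq> {0}"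
  obtains u where "u \<in> V" "norm u = 1" "s u = (u \<bullet> s u) *\<^sub>R u"
proof -
  define K where "K = sphere 0 1 \<inter> V"
  obtain v where v: "v \<in> V" "v \<noteq> 0" using V nontriv subspace_0 by blast
  then have "v /\<^sub>R norm v \<in> K" unfolding K_def using V by (simp add: subspace_scale)
  moreover have "compact K" unfolding K_def by (intro compact_Int_closed closed_subspace V) simp
  moreover have "continuous_on K (\<lambda>x. x \<bullet> s x)"
    using lin by (intro continuous_intros linear_continuous_on linear_conv_bounded_linear[THEN iffD1])
  ultimately obtain u where uK: "u \<in> K" and umax: "\<And>y. y \<in> K \<Longrightarrow> y \<bullet> s y \<le> u \<bullet> s u"
    using continuous_attains_sup[of K "\<lambda>x. x \<bullet> s x"] by blast
  have uV: "u \<in> V" and u1: "norm u = 1" using uK unfolding K_def by auto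
  have "x \<bullet> s x \<le> (u \<bullet> s u) * (x \<bullet> x)" if "x \<in> V" for x
  proof (cases "x = 0")
    case True then show ?thesis using lin by (simp add: linear_0)
  next
    case False
    have "x /\<^sub>R norm x \<in> K" unfolding K_def using False that V by (simp add: subspace_scale)
    then have "(x \<bullet> s x) / (norm x)\<^sup>2 \<le> u \<bullet> s u"
      using umax[of "x /\<^sub>R norm x"] lin by (simp add: linear_scale power2_eq_square field_simps)
    then show ?thesis using False by (simp add: divide_le_eq power2_norm_eq_inner mult.commute)
  qed
  then have "s u = (u \<bullet> s u) *\<^sub>R u"
    using u1 by (intro selfadjoint_eigenvector_of_max[OF lin sym V inv uV]) (auto simp: norm_eq_1)
  with uV u1 show thesis by (rule that)
qed

lemma selfadjoint_orthonormal_eigenbasis: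
  fixes s :: "'a::euclidean_space \<Rightarrow> 'a"
  assumes lin: "linear s" and sym: "\<And>x y. s x \<bullet> y = x \<bullet> s y"
    and "subspace V" and "s ` V \<subseteq> V"
  shows "\<exists>B. B \<subseteq> V \<and> finite B \<and> pairwise orthogonal B \<and> (\<forall>b\<in>B. norm b = 1) \<and>
    span B = V \<and> (\<forall>b\<in>B. s b = (b \<bullet> s b) *\<^sub>R b)"
  using assms(3,4)
proof (induction "dim V" arbitrary: V rule: less_induct)
  case less
  note V = less.prems(1) and inv = less.prems(2)
  show ?case
  proof (cases "V = {0}")
    case True
    then show ?thesis by (intro exI[of _ "{}"]) auto
  next
    case False
    obtain u where uV: "u \<in> V" and u1: "norm u = 1" and su: "s u = (u \<bullet> s u) *\<^sub>R u"
      using selfadjoint_unit_eigenvector_in_subspace[OF lin sym V inv False] .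
    have uu: "u \<bullet> u = 1" using u1 by (simp add: norm_eq_1)
    define W where "W = V \<inter> {y. orthogonal u y}"
    have W: "subspace W" unfolding W_def
      by (rule subspace_inter[OF V subspace_orthogonal_to_vector])
    have invW: "s ` W \<subseteq> W"
    proof clarify
      fix x assume "x \<in> W"
      moreover have "u \<bullet> s x = 0" if "orthogonal u x"
        using that sym[of u x] su unfolding orthogonal_def by (metis inner_scaleR_left mult_zero_right)
      ultimately show "s x \<in> W" using inv unfolding W_def orthogonal_def by auto
    qed
    have "u \<notin> W" using uu unfolding W_def orthogonal_def by simp
    then have "W \<subset> V" using uV unfolding W_def by blast
    then have "dim W < dim V"
      using W V by (metis dim_psubset span_eq_iff)
    from less.hyps[OF this W invW]
    obtain B where B: "B \<subseteq> W" "finite B" "pairwise orthogonal B" "\<forall>b\<in>B. norm b = 1"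
      "span B = W" "\<forall>b\<in>B. s b = (b \<bullet> s b) *\<^sub>R b" by blast
    have "V \<subseteq> span (insert u B)"
    proof
      fix x assume "x \<in> V"
      then have "x - (u \<bullet> x) *\<^sub>R u \<in> span B"
        unfolding B(5) W_def orthogonal_def using uV V uu
        by (simp add: subspace_diff subspace_scale inner_diff_right)
      then show "x \<in> span (insert u B)"
        by (metis diff_add_cancel span_add span_base span_mono span_mul insertI1 subset_insertI subsetD)
    qed
    moreover have "span (insert u B) \<subseteq> V"
      using B(1) uV V unfolding W_def by (intro span_minimal) auto
    moreover have "pairwise orthogonal (insert u B)"
      using B(1,3) unfolding W_def by (auto simp: pairwise_insert orthogonal_commute)
    ultimately show ?thesis
      using B uV u1 su unfolding W_def by (intro exI[of _ "insert u B"]) auto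
  qed
qed

lemma positive_selfadjoint_square_root:
  fixes s :: "'a::euclidean_space \<Rightarrow> 'a"
  assumes lin: "linear s" and sym: "\<And>x y. s x \<bullet> y = x \<bullet> s y" and pos: "\<And>x. 0 \<le> x \<bullet> s x"
  obtains r where "linear r" "\<And>x y. r x \<bullet> y = x \<bullet> r y" "\<And>x. r (r x) = s x"
proof -
  obtain B where B: "finite B" "pairwise orthogonal B" "\<forall>b\<in>B. norm b = 1" "span B = UNIV"
    "\<forall>b\<in>B. s b = (b \<bullet> s b) *\<^sub>R b"
    using selfadjoint_orthonormal_eigenbasis[OF lin sym, of UNIV] by auto
  define r where "r x = (\<Sum>b\<in>B. (sqrt (b \<bullet> s b) * (b \<bullet> x)) *\<^sub>R b)" for x
  have lr: "linear r"
    unfolding r_def by (rule linearI)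
      (simp_all add: inner_add_right distrib_left scaleR_add_left sum.distrib scaleR_sum_right mult.left_commute)
  moreover have "r x \<bullet> y = x \<bullet> r y" for x y
    unfolding r_def by (simp add: inner_sum_left inner_sum_right inner_commute mult.commute mult.left_commute)
  moreover have "r (r x) = s x" for x
  proof (rule linear_eq_on_span[of "\<lambda>x. r (r x)" s B])
    have rb: "r b = sqrt (b \<bullet> s b) *\<^sub>R b" if "b \<in> B" for b
    proof -
      have "b' \<bullet> b = (if b' = b then 1 else 0)" if "b' \<in> B" for b'
        using that \<open>b \<in> B\<close> B(2,3) unfolding pairwise_def orthogonal_def by (auto simp: norm_eq_1)
      then have "r b = (\<Sum>b'\<in>B. if b' = b then sqrt (b' \<bullet> s b') *\<^sub>R b' else 0)"
        unfolding r_def by (intro sum.cong) auto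
      then show ?thesis using that B(1) by simp
    qed
    fix b assume "b \<in> B"
    then show "r (r b) = s b"
      using rb B(5) pos[of b] lr by (simp add: linear_scale)
  qed (use lr lin B(4) in \<open>auto intro: linear_compose[OF lr lr, unfolded o_def]\<close>)
  ultimately show thesis by (rule that)
qed

lemma inner_matrix_vector_mul: "(A *v x) \<bullet> y = x \<bullet> (transpose A *v y)"
  for A :: "real^'n^'m"
  by (metis dot_lmul_matrix vector_transpose_matrix)

lemma psd_factorization:
  fixes S :: "real^'n^'n"
  assumes "psd S"
  shows "\<exists>A::real^'n^'n. A ** transpose A = S"
proof -
  have sym: "(S *v x) \<bullet> y = x \<bullet> (S *v y)" for x y
    using assms inner_matrix_vector_mul[of S x y] unfolding psd_def by simp
  obtain r where r: "linear r" "\<And>x y. r x \<bullet> y = x \<bullet> r y" "\<And>x. r (r x) = S *v x"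
    using assms positive_selfadjoint_square_root[OF matrix_vector_mul_linear sym]
    unfolding psd_def by blast
  have A: "matrix r *v x = r x" for x
    using r(1) by (simp add: matrix_works)
  then have "adjoint ((*v) (matrix r)) = r"
    using r(2) by (simp add: adjoint_unique)
  then have "transpose (matrix r) *v x = r x" for x
    by (metis adjoint_matrix)
  then have "(matrix r ** transpose (matrix r)) *v x = S *v x" for x
    by (metis matrix_vector_mul_assoc A r(3))
  then have "matrix r ** transpose (matrix r) = S" by (simp add: matrix_eq)
  then show ?thesis by blast
qed

section \<open>Extending partial isometries\<close>

lemma inner_orthonormal:
  assumes "pairwise orthogonal B" "\<And>x. x \<in> B \<Longrightarrow> norm x = 1" "x \<in> B" "y \<in> B"
  shows "x \<bullet> y = (if x = y then 1 else 0)"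
  using assms unfolding pairwise_def orthogonal_def by (auto simp: norm_eq_1)

lemma orthonormal_extends_to_basis:
  fixes T :: "'a::euclidean_space set"
  assumes T: "pairwise orthogonal T" "\<And>x. x \<in> T \<Longrightarrow> norm x = 1"
  obtains D where "T \<inter> D = {}" "pairwise orthogonal (T \<union> D)" "\<And>x. x \<in> D \<Longrightarrow> norm x = 1"
    "span (T \<union> D) = UNIV"
proof -
  define W where "W = {y. \<forall>x\<in>T. orthogonal x y}"
  have "subspace W"
    unfolding W_def by (rule subspace_orthogonal_to_vectors)
  then obtain D where D: "D \<subseteq> W" "pairwise orthogonal D" "\<And>x. x \<in> D \<Longrightarrow> norm x = 1" "span D = W"
    using orthonormal_basis_subspace by blast
  show thesis
  proof
    have "x = 0" if "x \<in> T" "x \<in> D" for x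
      using that D(1) orthogonal_self unfolding W_def by blast
    then show "T \<inter> D = {}"
      using D(3) by fastforce
    have "orthogonal x y" "orthogonal y x" if "x \<in> T" "y \<in> D" for x y
      using that D(1) orthogonal_commute unfolding W_def by blast+
    then show "pairwise orthogonal (T \<union> D)"
      using T(1) D(2) unfolding pairwise_def by blast
    have "x \<in> span (T \<union> D)" for x
    proof -
      obtain y z where "y \<in> span T" "\<And>w. w \<in> span T \<Longrightarrow> orthogonal z w" "x = y + z"
        using orthogonal_subspace_decomp_exists by blast
      moreover have "z \<in> span D"
        using calculation(2) span_base orthogonal_commute unfolding D(4) W_def by blast
      ultimately show ?thesis
        using span_mono[of T "T \<union> D"] span_mono[of D "T \<union> D"] by (auto intro: span_add)
    qed
    then show "span (T \<union> D) = UNIV" by auto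
  qed (use D in auto)
qed

lemma orthonormal_basis_card:
  fixes B :: "'a::euclidean_space set"
  assumes "pairwise orthogonal B" "\<And>x. x \<in> B \<Longrightarrow> norm x = 1" "span B = UNIV"
  shows "card B = DIM('a)"
proof -
  have "independent B"
    using assms(1,2) by (intro pairwise_orthogonal_independent) force+
  then have "card B = dim (span B)"
    by (simp add: indep_card_eq_dim_span)
  then show ?thesis using assms(3) by simp
qed

lemma linear_extension_orthogonal_transformation:
  fixes F :: "'a::euclidean_space \<Rightarrow> 'a"
  assumes B: "independent B" "span B = UNIV" and F: "\<And>x y. x \<in> B \<Longrightarrow> y \<in> B \<Longrightarrow> F x \<bullet> F y = x \<bullet> y"
  obtains Q where "orthogonal_transformation Q" "\<And>x. x \<in> B \<Longrightarrow> Q x = F x"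
proof -
  obtain Q where Q: "linear Q" "\<And>x. x \<in> B \<Longrightarrow> Q x = F x"
    using linear_independent_extend[OF B(1)] by blast
  have "bilinear (\<lambda>x y. Q x \<bullet> Q y)"
    using Q(1) unfolding bilinear_def
    by (auto intro!: linearI simp: linear_add linear_scale inner_add_left inner_add_right)
  moreover have "bilinear (\<lambda>x y. x \<bullet> (y::'a))"
    unfolding bilinear_def by (auto intro!: linearI simp: inner_add_left inner_add_right)
  ultimately have "Q v \<bullet> Q w = v \<bullet> w" for v w
    by (rule bilinear_eq[of _ _ UNIV B UNIV B]) (auto simp: B(2) Q(2) F)
  with Q show thesis
    by (intro that[of Q]) (auto simp: orthogonal_transformation_def)
qed

lemma orthonormal_isometry_extends:
  fixes F :: "'a::euclidean_space \<Rightarrow> 'a"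
  assumes T: "pairwise orthogonal T" "\<And>x. x \<in> T \<Longrightarrow> norm x = 1"
    and F: "\<And>x y. x \<in> T \<Longrightarrow> y \<in> T \<Longrightarrow> F x \<bullet> F y = x \<bullet> y"
  obtains Q where "orthogonal_transformation Q" "\<And>x. x \<in> T \<Longrightarrow> Q x = F x"
proof -
  have FT: "pairwise orthogonal (F ` T)" "\<And>x. x \<in> F ` T \<Longrightarrow> norm x = 1"
    using F inner_orthonormal[OF T] by (auto simp: pairwise_def orthogonal_def norm_eq_1)
  have injF: "inj_on F T"
  proof (rule inj_onI)
    fix x y assume "x \<in> T" "y \<in> T" "F x = F y"
    then have "x \<bullet> y = x \<bullet> x" using F by metis
    then show "x = y" using inner_orthonormal[OF T] \<open>x \<in> T\<close> \<open>y \<in> T\<close> by (simp split: if_splits)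
  qed
  obtain D1 where D1: "T \<inter> D1 = {}" "pairwise orthogonal (T \<union> D1)"
    "\<And>x. x \<in> D1 \<Longrightarrow> norm x = 1" "span (T \<union> D1) = UNIV"
    using orthonormal_extends_to_basis[OF T] by blast
  obtain D2 where D2: "F ` T \<inter> D2 = {}" "pairwise orthogonal (F ` T \<union> D2)"
    "\<And>x. x \<in> D2 \<Longrightarrow> norm x = 1" "span (F ` T \<union> D2) = UNIV"
    using orthonormal_extends_to_basis[OF FT] by blast
  define B1 where "B1 = T \<union> D1"
  define B2 where "B2 = F ` T \<union> D2"
  have B1: "pairwise orthogonal B1" "\<And>x. x \<in> B1 \<Longrightarrow> norm x = 1" "span B1 = UNIV"
    and B2: "pairwise orthogonal B2" "\<And>x. x \<in> B2 \<Longrightarrow> norm x = 1" "span B2 = UNIV"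
    using T(2) D1 FT(2) D2 unfolding B1_def B2_def by auto
  have fin: "finite B1" "finite B2"
    using B1(1) B2(1) by (auto intro: pairwise_orthogonal_imp_finite)
  have "card D1 = card D2"
    using orthonormal_basis_card[OF B1] orthonormal_basis_card[OF B2] fin D1(1) D2(1)
      card_image[OF injF] unfolding B1_def B2_def by (simp add: card_Un_disjoint)
  then obtain \<delta> where \<delta>: "bij_betw \<delta> D1 D2"
    using fin finite_same_card_bij unfolding B1_def B2_def by blast
  define G where "G x = (if x \<in> T then F x else \<delta> x)" for x
  have "bij_betw G B1 B2"
    unfolding B1_def B2_def G_def
    by (rule bij_betw_disjoint_Un[OF inj_on_imp_bij_betw[OF injF] \<delta> D1(1) D2(1)])
  have "G x \<bullet> G y = x \<bullet> y" if "x \<in> B1" "y \<in> B1" for x y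
  proof -
    have "G x \<in> B2" "G y \<in> B2" "G x = G y \<longleftrightarrow> x = y"
      using \<open>bij_betw G B1 B2\<close> that by (auto simp: bij_betw_def inj_on_eq_iff)
    then show ?thesis
      using inner_orthonormal[OF B1(1,2)] inner_orthonormal[OF B2(1,2)] that by simp
  qed
  moreover have "independent B1"
    using B1(1,2) by (intro pairwise_orthogonal_independent) force+
  ultimately obtain Q where "orthogonal_transformation Q" "\<And>x. x \<in> B1 \<Longrightarrow> Q x = G x"
    using linear_extension_orthogonal_transformation[OF _ B1(3)] by blast
  then show thesis
    by (intro that[of Q]) (auto simp: B1_def G_def)
qed

lemma orthogonal_transformation_intertwining:
  fixes h k :: "'c::euclidean_space \<Rightarrow> 'a::euclidean_space"
  assumes lh: "linear h" and lk: "linear k" and norm_eq: "\<And>y. norm (h y) = norm (k y)"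
  obtains Q where "orthogonal_transformation Q" "\<And>y. Q (h y) = k y"
proof -
  have inner_eq: "h y \<bullet> h y' = k y \<bullet> k y'" for y y'
  proof -
    have "h y \<bullet> h y' = ((norm (h (y + y')))\<^sup>2 - (norm (h y))\<^sup>2 - (norm (h y'))\<^sup>2) / 2"
      by (simp add: dot_norm linear_add[OF lh])
    also have "\<dots> = k y \<bullet> k y'"
      by (simp only: norm_eq) (simp add: dot_norm linear_add[OF lk])
    finally show ?thesis .
  qed
  have range_h: "subspace (range h)"
    by (metis span_linear_image[OF lh] span_UNIV subspace_span)
  obtain T where T: "T \<subseteq> range h" "pairwise orthogonal T" "\<And>x. x \<in> T \<Longrightarrow> norm x = 1"
      "independent T" "card T = dim (range h)" "span T = range h"
    using orthonormal_basis_subspace[OF range_h] by blast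
  define pre where "pre b = (SOME y. h y = b)" for b
  have h_pre: "h (pre b) = b" if "b \<in> T" for b
    using that T(1) unfolding pre_def by (metis (mono_tags) imageE someI_ex subsetD)
  have "k (pre b) \<bullet> k (pre b') = b \<bullet> b'" if "b \<in> T" "b' \<in> T" for b b'
    using inner_eq[of "pre b" "pre b'"] h_pre that by simp
  then obtain Q where Q: "orthogonal_transformation Q" "\<And>b. b \<in> T \<Longrightarrow> Q b = k (pre b)"
    using orthonormal_isometry_extends[OF T(2,3), of "\<lambda>b. k (pre b)"] by blast
  have "Q (h y) = k y" for y
  proof -
    have "h y \<in> span (h ` pre ` T)"
      using T(6) h_pre by (simp add: image_image)
    then obtain y' where y': "y' \<in> span (pre ` T)" "h y = h y'"
      using span_linear_image[OF lh, of "pre ` T"] by auto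
    have "norm (k (y - y')) = 0"
      using y'(2) norm_eq[of "y - y'"] by (simp add: linear_diff[OF lh])
    then have "k y = k y'"
      by (simp add: linear_diff[OF lk])
    moreover have "Q (h y') = k y'"
      by (rule linear_eq_on_span[OF linear_compose[OF lh orthogonal_transformation_linear[OF Q(1)],
            unfolded o_def] lk _ y'(1)]) (auto simp: Q(2) h_pre)
    ultimately show ?thesis using y'(2) by simp
  qed
  with Q(1) show thesis by (rule that)
qed

section \<open>Invariance of Lebesgue measure under orthogonal maps\<close>

lemma linear_borel_measurable[measurable]:
  fixes f :: "'a::euclidean_space \<Rightarrow> 'b::euclidean_space"
  assumes "linear f"
  shows "f \<in> borel_measurable borel"
  by (intro borel_measurable_continuous_onI linear_continuous_on linear_conv_bounded_linear[THEN iffD1] assms)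

(* A well-ordered index type with DIM('a) elements: the library's change of variables for linear
   maps is stated for real^'k with 'k::{finite,wellorder}, so orthogonal maps of an arbitrary
   Euclidean space are transported to such a coordinate space. *)
typedef (overloaded) ('a::euclidean_space) basis_index = "{..<DIM('a)}"
  by (rule exI[of _ 0]) simp

instance basis_index :: (euclidean_space) finite
proof
  show "finite (UNIV :: 'a basis_index set)"
    by (metis finite_imageI finite_lessThan type_definition.univ type_definition_basis_index)
qed

instantiation basis_index :: (euclidean_space) wellorder
begin

definition less_eq_basis_index :: "'a basis_index \<Rightarrow> 'a basis_index \<Rightarrow> bool"
  where "less_eq_basis_index x y \<longleftrightarrow> Rep_basis_index x \<le> Rep_basis_index y"

definition less_basis_index :: "'a basis_index \<Rightarrow> 'a basis_index \<Rightarrow> bool"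
  where "less_basis_index x y \<longleftrightarrow> Rep_basis_index x < Rep_basis_index y"

instance
proof
  fix P :: "'a basis_index \<Rightarrow> bool" and a
  assume step: "\<And>x. (\<And>y. y < x \<Longrightarrow> P y) \<Longrightarrow> P x"
  show "P a"
    by (induction a rule: measure_induct_rule[of Rep_basis_index]) (rule step, simp add: less_basis_index_def)
qed (auto simp: less_eq_basis_index_def less_basis_index_def Rep_basis_index_inject)

end

lemma card_basis_index: "CARD('a::euclidean_space basis_index) = DIM('a)"
  using type_definition.card[OF type_definition_basis_index] by simp

lemma distr_lborel_orthogonal_transformation_vec:
  fixes Q :: "real^'k::{finite,wellorder} \<Rightarrow> real^'k::_"
  assumes Q: "orthogonal_transformation Q"
  shows "distr lborel borel Q = lborel"
proof -
  have Q_borel: "Q \<in> borel_measurable borel"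
    using Q by (intro linear_borel_measurable orthogonal_transformation_linear)
  have "lborel = distr lborel borel Q"
  proof (rule lborel_eqI)
    fix l u :: "real^'k::_" assume le: "\<And>b. b \<in> Basis \<Longrightarrow> l \<bullet> b \<le> u \<bullet> b"
    have Q_inv: "orthogonal_transformation (inv Q)"
      using Q by (rule orthogonal_transformation_inv)
    have pre: "Q -` box l u = inv Q ` box l u"
      using Q by (simp add: bij_vimage_eq_inv_image orthogonal_transformation_bij)
    have lmeas: "Q -` box l u \<in> lmeasurable"
      unfolding pre by (rule measurable_orthogonal_image[OF Q_inv lmeasurable_box])
    have "Q -` box l u \<in> sets borel"
      using Q_borel by (simp add: measurable_sets_borel)
    then have "emeasure lborel (Q -` box l u) = emeasure lebesgue (Q -` box l u)"
      by (simp add: emeasure_completion)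
    also have "\<dots> = measure lebesgue (Q -` box l u)"
      using lmeas by (intro emeasure_eq_ennreal_measure fmeasurableD2)
    also have "measure lebesgue (Q -` box l u) = measure lebesgue (box l u)"
      unfolding pre by (rule measure_orthogonal_image[OF Q_inv lmeasurable_box])
    also have "ennreal (measure lebesgue (box l u)) = emeasure lebesgue (box l u)"
      using lmeasurable_box by (intro emeasure_eq_ennreal_measure[symmetric] fmeasurableD2)
    also have "\<dots> = emeasure lborel (box l u)"
      by (simp add: emeasure_completion)
    also have "\<dots> = (\<Prod>b\<in>Basis. (u - l) \<bullet> b)"
      using le by (simp add: emeasure_lborel_box_eq inner_diff_left prod_nonneg)
    finally show "emeasure (distr lborel borel Q) (box l u) = (\<Prod>b\<in>Basis. (u - l) \<bullet> b)"
      using Q_borel by (simp add: emeasure_distr prod_nonneg inner_diff_left le)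
  qed simp
  then show ?thesis ..
qed

definition basis_transfer :: "('a::euclidean_space \<Rightarrow> 'c::euclidean_space) \<Rightarrow> 'a \<Rightarrow> 'c"
  where "basis_transfer h x = (\<Sum>b\<in>Basis. (x \<bullet> b) *\<^sub>R h b)"

lemma linear_basis_transfer: "linear (basis_transfer h)"
  unfolding basis_transfer_def
  by (rule linearI) (simp_all add: inner_add_left scaleR_add_left sum.distrib scaleR_sum_right)

context
  fixes h :: "'a::euclidean_space \<Rightarrow> 'c::euclidean_space"
  assumes h: "bij_betw h Basis Basis"
begin

lemma inner_basis_transfer_Basis:
  assumes b: "b \<in> Basis"
  shows "basis_transfer h x \<bullet> h b = x \<bullet> b"
proof -
  have "basis_transfer h x \<bullet> h b = (\<Sum>b'\<in>Basis. (x \<bullet> b') * (h b' \<bullet> h b))"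
    unfolding basis_transfer_def by (simp add: inner_sum_left)
  also have "\<dots> = (\<Sum>b'\<in>Basis. if b' = b then x \<bullet> b else 0)"
  proof (rule sum.cong)
    fix b' :: 'a assume b': "b' \<in> Basis"
    then have "h b' \<in> Basis" "h b \<in> Basis" "h b' = h b \<longleftrightarrow> b' = b"
      using h b by (auto simp: bij_betw_def inj_on_eq_iff)
    then show "(x \<bullet> b') * (h b' \<bullet> h b) = (if b' = b then x \<bullet> b else 0)"
      by (auto simp: inner_Basis)
  qed simp
  also have "\<dots> = x \<bullet> b"
    using b by simp
  finally show ?thesis .
qed

lemma inner_basis_transfer: "basis_transfer h x \<bullet> basis_transfer h y = x \<bullet> y"
proof -
  have "basis_transfer h x \<bullet> basis_transfer h y
      = (\<Sum>c\<in>Basis. (basis_transfer h x \<bullet> c) * (basis_transfer h y \<bullet> c))"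
    by (rule euclidean_inner)
  also have "\<dots> = (\<Sum>b\<in>Basis. (basis_transfer h x \<bullet> h b) * (basis_transfer h y \<bullet> h b))"
    by (rule sum.reindex_bij_betw[OF h, symmetric])
  also have "\<dots> = x \<bullet> y"
    by (simp add: inner_basis_transfer_Basis euclidean_inner[of x y])
  finally show ?thesis .
qed

lemma distr_lborel_basis_transfer: "distr lborel borel (basis_transfer h) = lborel"
proof -
  have "lborel = distr lborel borel (basis_transfer h)"
  proof (rule lborel_eqI)
    fix l u :: 'c assume le: "\<And>b. b \<in> Basis \<Longrightarrow> l \<bullet> b \<le> u \<bullet> b"
    define l' :: 'a where "l' = (\<Sum>b\<in>Basis. (l \<bullet> h b) *\<^sub>R b)"
    define u' :: 'a where "u' = (\<Sum>b\<in>Basis. (u \<bullet> h b) *\<^sub>R b)"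
    have l'u': "l' \<bullet> b = l \<bullet> h b" "u' \<bullet> b = u \<bullet> h b" if "b \<in> Basis" for b
      unfolding l'_def u'_def using that by (simp_all add: inner_sum_left inner_Basis if_distrib cong: if_cong)
    have "basis_transfer h x \<in> box l u \<longleftrightarrow> (\<forall>b\<in>Basis. l \<bullet> h b < x \<bullet> b \<and> x \<bullet> b < u \<bullet> h b)" for x
    proof -
      have "basis_transfer h x \<in> box l u \<longleftrightarrow>
          (\<forall>c\<in>h ` Basis. l \<bullet> c < basis_transfer h x \<bullet> c \<and> basis_transfer h x \<bullet> c < u \<bullet> c)"
        using h by (simp add: mem_box bij_betw_def)
      then show ?thesis by (simp add: inner_basis_transfer_Basis)
    qed
    then have "basis_transfer h -` box l u = box l' u'"
      by (auto simp: mem_box l'u')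
    then have "emeasure (distr lborel borel (basis_transfer h)) (box l u) = emeasure lborel (box l' u')"
      by (simp add: emeasure_distr linear_basis_transfer)
    also have "\<dots> = (\<Prod>b\<in>Basis. (u - l) \<bullet> h b)"
      using le h by (auto simp: emeasure_lborel_box_eq inner_diff_left l'u' prod_nonneg bij_betw_def
          intro!: arg_cong[where f=ennreal] prod.cong)
    also have "\<dots> = (\<Prod>c\<in>Basis. (u - l) \<bullet> c)"
      using prod.reindex_bij_betw[OF h, of "\<lambda>c. (u - l) \<bullet> c"] by simp
    finally show "emeasure (distr lborel borel (basis_transfer h)) (box l u) = (\<Prod>c\<in>Basis. (u - l) \<bullet> c)" .
  qed simp
  then show ?thesis ..
qed

end

lemma basis_transfer_inverse:
  assumes h: "bij_betw h Basis Basis"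
  shows "basis_transfer (inv_into Basis h) (basis_transfer h x) = x"
proof (rule euclidean_eqI)
  fix b :: 'a assume b: "b \<in> Basis"
  have h': "bij_betw (inv_into Basis h) Basis Basis"
    using h by (rule bij_betw_inv_into)
  have "h b \<in> Basis" "inv_into Basis h (h b) = b"
    using h b by (auto simp: bij_betw_def)
  then show "basis_transfer (inv_into Basis h) (basis_transfer h x) \<bullet> b = x \<bullet> b"
    using inner_basis_transfer_Basis[OF h' \<open>h b \<in> Basis\<close>] inner_basis_transfer_Basis[OF h b] by simp
qed

lemma distr_lborel_orthogonal_transformation:
  fixes Q :: "'a::euclidean_space \<Rightarrow> 'a"
  assumes Q: "orthogonal_transformation Q"
  shows "distr lborel borel Q = lborel"
proof -
  obtain h :: "'a \<Rightarrow> real^'a basis_index" where h: "bij_betw h Basis Basis"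
    using finite_same_card_bij[of "Basis :: 'a set" "Basis :: (real^'a basis_index) set"]
    by (auto simp: card_basis_index)
  define \<iota> where "\<iota> = basis_transfer h"
  define \<kappa> where "\<kappa> = basis_transfer (inv_into Basis h)"
  have h': "bij_betw (inv_into Basis h) Basis Basis"
    using h by (rule bij_betw_inv_into)
  have \<kappa>\<iota>: "\<kappa> (\<iota> x) = x" for x
    unfolding \<iota>_def \<kappa>_def by (rule basis_transfer_inverse[OF h])
  define Q' where "Q' = \<iota> \<circ> Q \<circ> \<kappa>"
  have Q': "orthogonal_transformation Q'"
    using Q unfolding orthogonal_transformation_def Q'_def \<iota>_def \<kappa>_def
    by (simp add: linear_compose linear_basis_transfer inner_basis_transfer[OF h] inner_basis_transfer[OF h'])
  have \<kappa>_lborel: "distr lborel borel \<kappa> = lborel"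
    unfolding \<kappa>_def by (rule distr_lborel_basis_transfer[OF h'])
  have [measurable]: "\<kappa> \<in> borel_measurable borel"
    unfolding \<kappa>_def by (intro linear_borel_measurable linear_basis_transfer)
  have [measurable]: "Q \<in> borel_measurable borel" "Q' \<in> borel_measurable borel"
    by (intro linear_borel_measurable orthogonal_transformation_linear Q Q')+
  have "distr lborel borel Q = distr (distr lborel borel \<kappa>) borel Q"
    by (simp add: \<kappa>_lborel)
  also have "\<dots> = distr lborel borel (Q \<circ> \<kappa>)"
    by (simp add: distr_distr)
  also have "Q \<circ> \<kappa> = \<kappa> \<circ> Q'"
    by (auto simp: Q'_def \<kappa>\<iota>)
  also have "distr lborel borel (\<kappa> \<circ> Q') = distr (distr lborel borel Q') borel \<kappa>"
    by (simp add: distr_distr)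
  also have "\<dots> = lborel"
    by (simp add: distr_lborel_orthogonal_transformation_vec[OF Q'] \<kappa>_lborel)
  finally show ?thesis .
qed

section \<open>The standard Gaussian measure\<close>

abbreviation std_normal :: "real measure"
  where "std_normal \<equiv> density lborel (\<lambda>x. ennreal (std_normal_density x))"

definition std_gaussian_density :: "'a::euclidean_space \<Rightarrow> real"
  where "std_gaussian_density x = (\<Prod>b\<in>Basis. std_normal_density (x \<bullet> b))"

definition std_gaussian :: "'a::euclidean_space measure"
  where "std_gaussian = density lborel (\<lambda>x. ennreal (std_gaussian_density x))"

lemma borel_measurable_std_gaussian_density[measurable]: "std_gaussian_density \<in> borel_measurable borel"
  unfolding std_gaussian_density_def by measurable

lemma std_gaussian_density_eq:
  fixes x :: "'a::euclidean_space"
  shows "std_gaussian_density x = exp (- (x \<bullet> x) / 2) / sqrt (2 * pi) ^ DIM('a)"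
proof -
  have "std_gaussian_density x = (\<Prod>b\<in>(Basis::'a set). exp (- ((x \<bullet> b)\<^sup>2) / 2)) / sqrt (2 * pi) ^ DIM('a)"
    unfolding std_gaussian_density_def std_normal_density_def by (simp add: prod_dividef)
  also have "(\<Prod>b\<in>(Basis::'a set). exp (- ((x \<bullet> b)\<^sup>2) / 2)) = exp (- (x \<bullet> x) / 2)"
    by (simp add: exp_sum euclidean_inner[of x x] power2_eq_square sum_divide_distrib flip: sum_negf)
  finally show ?thesis .
qed

lemma ennreal_std_gaussian_density:
  "ennreal (std_gaussian_density x) = (\<Prod>b\<in>Basis. ennreal (std_normal_density (x \<bullet> b)))"
  unfolding std_gaussian_density_def by (rule prod_ennreal[symmetric]) (simp add: normal_density_nonneg)

lemma sets_std_gaussian[measurable_cong, simp]: "sets std_gaussian = sets borel"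
  by (simp add: std_gaussian_def)

lemma space_std_gaussian[simp]: "space std_gaussian = UNIV"
  by (simp add: std_gaussian_def)

lemma measurable_std_gaussian[simp]: "measurable std_gaussian M = measurable borel M"
  by (rule measurable_cong_sets) simp_all

lemma prob_space_std_gaussian: "prob_space (std_gaussian :: 'a::euclidean_space measure)"
proof
  have "emeasure (std_gaussian :: 'a measure) UNIV
      = (\<integral>\<^sup>+x. (\<Prod>b\<in>Basis. ennreal (std_normal_density ((x::'a) \<bullet> b))) \<partial>lborel)"
    unfolding std_gaussian_def by (simp add: emeasure_density ennreal_std_gaussian_density)
  also have "\<dots> = (\<Prod>b\<in>(Basis::'a set). \<integral>\<^sup>+t. ennreal (std_normal_density t) \<partial>lborel)"
    by (rule nn_integral_lborel_prod) auto
  also have "(\<integral>\<^sup>+t. ennreal (std_normal_density t) \<partial>lborel) = 1"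
    using prob_space.emeasure_space_1[OF prob_space_normal_density[of 1 0]]
    by (simp add: emeasure_density)
  finally show "emeasure (std_gaussian :: 'a measure) (space std_gaussian) = 1" by simp
qed

lemma emeasure_std_gaussian_box:
  "emeasure (std_gaussian :: 'a::euclidean_space measure) (box l u)
    = (\<Prod>b\<in>Basis. emeasure std_normal {l \<bullet> b<..<u \<bullet> b})"
proof -
  have "indicator (box l u) x = (\<Prod>b\<in>(Basis::'a set). indicator {l \<bullet> b<..<u \<bullet> b} (x \<bullet> b) :: ennreal)"
    for x :: 'a
    by (simp add: mem_box indicator_def prod.If_cases)
  then have "emeasure (std_gaussian :: 'a measure) (box l u)
      = (\<integral>\<^sup>+x. (\<Prod>b\<in>Basis. ennreal (std_normal_density (x \<bullet> b)) * indicator {l \<bullet> b<..<u \<bullet> b} (x \<bullet> b)) \<partial>lborel)"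
    unfolding std_gaussian_def by (simp add: emeasure_density ennreal_std_gaussian_density prod.distrib)
  also have "\<dots> = (\<Prod>b\<in>Basis. emeasure std_normal {l \<bullet> b<..<u \<bullet> b})"
    by (subst nn_integral_lborel_prod) (auto simp: emeasure_density)
  finally show ?thesis .
qed


lemma measure_eqI_boxes:
  fixes M N :: "'a::euclidean_space measure"
  assumes "sets M = sets borel" "sets N = sets borel" "finite_measure M"
    and eq: "\<And>l u. emeasure M (box l u) = emeasure N (box l u)"
  shows "M = N"
proof (rule measure_eqI_generator_eq)
  let ?E = "range (\<lambda>(a, b). box a b::'a set)"
  let ?A = "\<lambda>n::nat. box (- (real n *\<^sub>R One)) (real n *\<^sub>R One) :: 'a set"
  show "Int_stable ?E"
    by (auto simp: Int_stable_def box_Int_box)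
  show "?E \<subseteq> Pow UNIV" "sets M = sigma_sets UNIV ?E" "sets N = sigma_sets UNIV ?E"
    by (simp_all add: borel_eq_box assms(1,2))
  show "range ?A \<subseteq> ?E" "(\<Union>i. ?A i) = UNIV"
    unfolding UN_box_eq_UNIV by auto
  show "emeasure M (?A i) \<noteq> \<infinity>" for i
    using assms(3) by (simp add: finite_measure.emeasure_finite)
qed (use eq in auto)

lemma distr_std_gaussian_orthogonal_transformation:
  fixes Q :: "'a::euclidean_space \<Rightarrow> 'a"
  assumes Q: "orthogonal_transformation Q"
  shows "distr std_gaussian borel Q = std_gaussian"
proof (rule measure_eqI)
  have [measurable]: "Q \<in> borel_measurable borel"
    using Q by (intro linear_borel_measurable orthogonal_transformation_linear)
  fix A :: "'a set" assume "A \<in> sets (distr std_gaussian borel Q)"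
  then have [measurable]: "A \<in> sets borel" by simp
  have "Q -` A \<in> sets borel"
    by (simp add: measurable_sets_borel[of Q borel])
  have density_Q: "std_gaussian_density (Q x) = std_gaussian_density x" for x
    using Q by (simp add: std_gaussian_density_eq orthogonal_transformation_def)
  have "emeasure (distr std_gaussian borel Q) A
      = (\<integral>\<^sup>+x. ennreal (std_gaussian_density (Q x)) * indicator A (Q x) \<partial>lborel)"
    using \<open>Q -` A \<in> sets borel\<close>
    by (simp add: emeasure_distr std_gaussian_def emeasure_density density_Q indicator_vimage[symmetric])
  also have "\<dots> = (\<integral>\<^sup>+y. ennreal (std_gaussian_density y) * indicator A y \<partial>distr lborel borel Q)"
    by (simp add: nn_integral_distr)
  also have "\<dots> = emeasure std_gaussian A"
    by (simp add: distr_lborel_orthogonal_transformation[OF Q] std_gaussian_def emeasure_density)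
  finally show "emeasure (distr std_gaussian borel Q) A = emeasure std_gaussian A" .
qed simp

lemma std_gaussian_pair:
  "(std_gaussian :: ('a::euclidean_space \<times> 'b::euclidean_space) measure) = std_gaussian \<Otimes>\<^sub>M std_gaussian"
proof (rule measure_eqI_boxes)
  interpret G: prob_space "std_gaussian :: 'b measure" by (rule prob_space_std_gaussian)
  have "sets ((std_gaussian :: 'a measure) \<Otimes>\<^sub>M (std_gaussian :: 'b measure)) = sets (borel \<Otimes>\<^sub>M borel)"
    by (intro sets_pair_measure_cong) simp_all
  then show "sets ((std_gaussian :: 'a measure) \<Otimes>\<^sub>M (std_gaussian :: 'b measure)) = sets borel"
    by (simp only: borel_prod)
  show "finite_measure (std_gaussian :: ('a \<times> 'b) measure)"
    using prob_space_std_gaussian by (rule prob_space.finite_measure)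
  fix l u :: "'a \<times> 'b"
  obtain l1 l2 u1 u2 where lu: "l = (l1, l2)" "u = (u1, u2)" by (cases l, cases u)
  let ?I = "\<lambda>c. emeasure std_normal {l \<bullet> c<..<u \<bullet> c}"
  have "(\<Prod>c\<in>Basis. ?I c) = (\<Prod>c\<in>(\<lambda>v. (v, 0)) ` Basis. ?I c) * (\<Prod>c\<in>Pair 0 ` Basis. ?I c)"
    unfolding Basis_prod_def by (rule prod.union_disjoint) (auto simp: nonzero_Basis)
  also have "\<dots> = emeasure (std_gaussian :: 'a measure) (box l1 u1) * emeasure (std_gaussian :: 'b measure) (box l2 u2)"
    by (simp add: emeasure_std_gaussian_box prod.reindex inj_on_def lu inner_Pair)
  also have "box l u = box l1 u1 \<times> box l2 u2"
    by (auto simp: lu mem_box Basis_prod_def inner_Pair ball_Un)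
  then have "emeasure (std_gaussian :: 'a measure) (box l1 u1) * emeasure (std_gaussian :: 'b measure) (box l2 u2)
      = emeasure (std_gaussian \<Otimes>\<^sub>M std_gaussian) (box l u)"
    by (simp add: G.emeasure_pair_measure_Times)
  finally show "emeasure std_gaussian (box l u) = emeasure (std_gaussian \<Otimes>\<^sub>M std_gaussian) (box l u)"
    by (simp add: emeasure_std_gaussian_box)
qed simp


lemma std_gauss_vec_eq_std_gaussian: "(std_gauss_vec :: (real^'n) measure) = std_gaussian"
proof -
  let ?P = "PiM (UNIV :: 'n set) (\<lambda>_. std_normal)"
  interpret P: product_prob_space "\<lambda>_::'n. std_normal" UNIV
    by (intro product_prob_spaceI prob_space_normal_density) simp
  have vec_measurable: "(\<lambda>f. \<chi> i. f i) \<in> measurable ?P (borel :: (real^'n) measure)"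
  proof -
    have "measurable ?P std_normal = measurable ?P borel"
      by (rule measurable_cong_sets) simp_all
    moreover have "(\<lambda>x. x i) \<in> measurable ?P std_normal" for i
      by (rule measurable_component_singleton) simp
    ultimately have comp: "(\<lambda>x. (\<chi> j. x j) \<bullet> axis i 1) \<in> borel_measurable ?P" for i :: 'n
      by (simp add: inner_axis)
    show ?thesis
    proof (rule borel_measurable_euclidean_space[THEN iffD2], intro ballI)
      fix b :: "real^'n" assume "b \<in> Basis"
      then obtain i where "b = axis i 1" by (auto simp: Basis_vec_def)
      then show "(\<lambda>x. (\<chi> j. x j) \<bullet> b) \<in> borel_measurable ?P" using comp[of i] by simp
    qed
  qed
  have std: "std_gauss_vec = distr ?P borel (\<lambda>f. \<chi> i. f i)"
    unfolding std_gauss_vec_def ..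
  show ?thesis
  proof (rule measure_eqI_boxes)
    show "finite_measure (std_gauss_vec :: (real^'n) measure)"
      unfolding std by (intro prob_space.finite_measure prob_space.prob_space_distr P.prob_space_axioms vec_measurable)
    fix l u :: "real^'n"
    have "(\<lambda>f. \<chi> i. f i) -` box l u \<inter> space ?P = PiE UNIV (\<lambda>i. {l $ i<..<u $ i})"
      by (auto simp: mem_box_cart PiE_iff space_PiM)
    then have "emeasure std_gauss_vec (box l u) = (\<Prod>i\<in>UNIV. emeasure std_normal {l $ i<..<u $ i})"
      unfolding std using vec_measurable by (simp add: emeasure_distr P.emeasure_PiM)
    also have "\<dots> = (\<Prod>b\<in>(Basis :: (real^'n) set). emeasure std_normal {l \<bullet> b<..<u \<bullet> b})"
    proof -
      have Basis_vec: "(Basis :: (real^'n) set) = range (\<lambda>i. axis i 1)"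
        by (auto simp: Basis_vec_def)
      have "inj (\<lambda>i::'n. axis i (1::real))"
        by (auto simp: inj_on_def axis_eq_axis)
      then show ?thesis unfolding Basis_vec by (simp add: prod.reindex inner_axis)
    qed
    finally show "emeasure std_gauss_vec (box l u) = emeasure std_gaussian (box l u)"
      by (simp add: emeasure_std_gaussian_box)
  qed (simp_all add: std)
qed


lemma distr_std_gaussian_linear_eq:
  fixes f g :: "'a::euclidean_space \<Rightarrow> 'c::euclidean_space"
  assumes f: "linear f" and g: "linear g" and norm_eq: "\<And>y. norm (adjoint f y) = norm (adjoint g y)"
  shows "distr std_gaussian borel f = distr std_gaussian borel g"
proof -
  obtain Q where Q: "orthogonal_transformation Q" "\<And>y. Q (adjoint f y) = adjoint g y"
    using orthogonal_transformation_intertwining[OF adjoint_linear[OF f] adjoint_linear[OF g] norm_eq] by blast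
  define P where "P = inv Q"
  have P: "orthogonal_transformation P"
    unfolding P_def using Q(1) by (rule orthogonal_transformation_inv)
  have QP: "Q (P x) = x" for x
    unfolding P_def using orthogonal_transformation_surj[OF Q(1)] by (simp add: surj_f_inv_f)
  have "g x \<bullet> y = f (P x) \<bullet> y" for x y
  proof -
    have "g x \<bullet> y = Q (P x) \<bullet> Q (adjoint f y)"
      by (simp add: QP Q(2) adjoint_works[OF g])
    also have "\<dots> = f (P x) \<bullet> y"
      using Q(1) by (simp add: orthogonal_transformation_def adjoint_works[OF f])
    finally show ?thesis .
  qed
  then have "g = f \<circ> P"
    by (metis comp_apply euclidean_eqI ext)
  moreover have "f \<in> borel_measurable borel" "P \<in> borel_measurable borel"
    using f P by (simp_all add: orthogonal_transformation_linear)
  ultimately have "distr std_gaussian borel g = distr (distr std_gaussian borel P) borel f"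
    by (simp add: distr_distr)
  then show ?thesis
    by (simp add: distr_std_gaussian_orthogonal_transformation[OF P])
qed

section \<open>Gaussian vectors\<close>

lemma bind_distr_eq_distr_pair:
  assumes M: "prob_space M" and N: "prob_space N"
    and f[measurable]: "case_prod f \<in> M \<Otimes>\<^sub>M N \<rightarrow>\<^sub>M L"
  shows "bind M (\<lambda>x. distr N L (f x)) = distr (M \<Otimes>\<^sub>M N) L (case_prod f)"
proof -
  interpret N: prob_space N by (rule N)
  have kernel: "(\<lambda>x. distr N L (f x)) \<in> M \<rightarrow>\<^sub>M subprob_algebra L"
    by (rule measurable_distr2[OF f measurable_const]) (simp add: N.M_in_subprob)
  have nonempty: "space M \<noteq> {}"
    using M by (simp add: prob_space.not_empty)
  show ?thesis
  proof (rule measure_eqI)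
    show "sets (bind M (\<lambda>x. distr N L (f x))) = sets (distr (M \<Otimes>\<^sub>M N) L (case_prod f))"
      using sets_bind[OF sets_kernel[OF kernel] nonempty] by simp
    fix A assume "A \<in> sets (bind M (\<lambda>x. distr N L (f x)))"
    then have A: "A \<in> sets L"
      using sets_bind[OF sets_kernel[OF kernel] nonempty] by simp
    have "case_prod f -` A \<inter> space (M \<Otimes>\<^sub>M N) \<in> sets (M \<Otimes>\<^sub>M N)"
      using A by measurable
    moreover have "Pair x -` (case_prod f -` A \<inter> space (M \<Otimes>\<^sub>M N)) = f x -` A \<inter> space N"
      if "x \<in> space M" for x
      using that by (auto simp: space_pair_measure)
    ultimately show "emeasure (bind M (\<lambda>x. distr N L (f x))) A = emeasure (distr (M \<Otimes>\<^sub>M N) L (case_prod f)) A"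
      using A kernel nonempty
      by (simp add: emeasure_bind[of M _ L] emeasure_distr N.emeasure_pair_measure_alt
          measurable_Pair2' cong: nn_integral_cong)
  qed
qed


lemma psd_add_scaleR:
  fixes S D :: "real^'n^'n"
  assumes "psd S" "psd D" "0 \<le> c"
  shows "psd (c *\<^sub>R S + D)"
proof -
  have "transpose (c *\<^sub>R S + D) = c *\<^sub>R transpose S + transpose D"
    by (simp add: transpose_def transpose_scalar vec_eq_iff)
  then show ?thesis
    using assms unfolding psd_def
    by (simp add: matrix_vector_mult_add_rdistrib scaleR_matrix_vector_assoc[symmetric] inner_add_right)
qed

lemma psd_scaleR_mat_1: "0 \<le> c \<Longrightarrow> psd (c *\<^sub>R (mat 1 :: real^'n^'n))"
  unfolding psd_def by (simp add: transpose_scalar scaleR_matrix_vector_assoc[symmetric])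

definition cov_factor :: "real^'n^'n \<Rightarrow> real^'n^'n"
  where "cov_factor S = (SOME A. A ** transpose A = S)"

lemma cov_factor: "psd S \<Longrightarrow> cov_factor S ** transpose (cov_factor S) = S"
  unfolding cov_factor_def using psd_factorization by (rule someI_ex)

lemma gauss_vec_eq_distr: "gauss_vec m S = distr std_gaussian borel (\<lambda>z. m + cov_factor S *v z)"
  unfolding gauss_vec_def cov_factor_def by (simp add: std_gauss_vec_eq_std_gaussian)


lemma prob_space_gauss_vec: "prob_space (gauss_vec m S)"
  unfolding gauss_vec_eq_distr by (intro prob_space.prob_space_distr prob_space_std_gaussian) simp

lemma sets_gauss_vec[measurable_cong, simp]: "sets (gauss_vec m S) = sets borel"
  unfolding gauss_vec_eq_distr by simp

lemma gauss_vec_in_subprob_algebra: "gauss_vec m S \<in> space (subprob_algebra borel)"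
  by (simp add: space_subprob_algebra prob_space_imp_subprob_space prob_space_gauss_vec)

lemma gauss_vec_affine_kernel_measurable:
  "(\<lambda>e. gauss_vec (m + g *\<^sub>R e) D) \<in> borel \<rightarrow>\<^sub>M subprob_algebra borel"
  unfolding gauss_vec_eq_distr
  by (rule measurable_distr2[where M=borel, OF _ measurable_const])
    (simp_all add: space_subprob_algebra prob_space_imp_subprob_space prob_space_std_gaussian)

lemma inner_transpose_mult_self:
  fixes A :: "real^'n^'m"
  shows "(transpose A *v y) \<bullet> (transpose A *v y) = y \<bullet> ((A ** transpose A) *v y)"
  using inner_matrix_vector_mul[of "transpose A" y "transpose A *v y"]
  by (simp only: transpose_transpose matrix_vector_mul_assoc)


lemma psd_mult_transpose: "psd (A ** transpose A)"
  for A :: "real^'k^'n"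
  by (simp add: psd_def matrix_transpose_mul inner_transpose_mult_self[symmetric])

lemma distr_std_gaussian_pair_affine:
  fixes A B :: "real^'n^'n"
  shows "distr (std_gaussian \<Otimes>\<^sub>M std_gaussian) borel (\<lambda>(x, z). c + g *\<^sub>R (A *v x) + B *v z)
    = gauss_vec c (g\<^sup>2 *\<^sub>R (A ** transpose A) + B ** transpose B)"
    (is "_ = gauss_vec c ?S")
proof -
  define C where "C = cov_factor ?S"
  have CC: "C ** transpose C = ?S"
    unfolding C_def by (intro cov_factor psd_add_scaleR psd_mult_transpose) simp
  define L where "L p = g *\<^sub>R (A *v fst p) + B *v snd p" for p :: "(real^'n) \<times> (real^'n)"
  define L' where "L' p = C *v fst p" for p :: "(real^'n) \<times> (real^'n)"
  have lin: "linear L" "linear L'"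
    unfolding L_def L'_def
    by (auto intro!: linearI simp: matrix_vector_right_distrib scaleR_matrix_vector_assoc[symmetric]
        matrix_vector_mult_scaleR algebra_simps)
  \<comment> \<open>Both maps have covariance ?S, so their adjoints have equal norms.\<close>
  have "adjoint L = (\<lambda>y. (g *\<^sub>R (transpose A *v y), transpose B *v y))"
    by (rule adjoint_unique) (simp add: L_def inner_add_left inner_Pair inner_matrix_vector_mul)
  moreover have "adjoint L' = (\<lambda>y. (transpose C *v y, 0))"
    by (rule adjoint_unique) (simp add: L'_def inner_Pair inner_matrix_vector_mul)
  ultimately have "norm (adjoint L y) = norm (adjoint L' y)" for y
    by (simp add: norm_eq_sqrt_inner inner_Pair inner_transpose_mult_self CC power2_eq_square
        matrix_vector_mult_add_rdistrib scaleR_matrix_vector_assoc[symmetric] inner_add_right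
        del: transpose_matrix_vector)
  then have L_L': "distr std_gaussian borel L = distr std_gaussian borel L'"
    by (rule distr_std_gaussian_linear_eq[OF lin])
  have [measurable]: "L \<in> borel_measurable borel" "L' \<in> borel_measurable borel"
    using lin by simp_all
  have "distr (std_gaussian \<Otimes>\<^sub>M std_gaussian) borel (\<lambda>(x, z). c + g *\<^sub>R (A *v x) + B *v z)
      = distr (distr std_gaussian borel L) borel ((+) c)"
    by (simp add: std_gaussian_pair[symmetric] distr_distr comp_def L_def split_beta' add.assoc)
  also have "\<dots> = distr std_gaussian borel (\<lambda>p :: (real^'n) \<times> (real^'n). c + C *v fst p)"
    by (simp add: L_L' distr_distr comp_def L'_def)
  also have "\<dots> = distr (distr (std_gaussian \<Otimes>\<^sub>M (std_gaussian :: (real^'n) measure)) std_gaussian fst)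
      borel (\<lambda>z. c + C *v z)"
    by (subst std_gaussian_pair, subst distr_distr) (auto simp: comp_def)
  also have "\<dots> = gauss_vec c ?S"
    by (simp add: prob_space.distr_pair_fst[OF prob_space_std_gaussian] gauss_vec_eq_distr C_def)
  finally show ?thesis .
qed

lemma bind_gauss_vec_affine:
  assumes "psd S" "psd D"
  shows "bind (gauss_vec \<mu> S) (\<lambda>e. gauss_vec (m + g *\<^sub>R e) D) = gauss_vec (m + g *\<^sub>R \<mu>) (g\<^sup>2 *\<^sub>R S + D)"
proof -
  define A B where "A = cov_factor S" and "B = cov_factor D"
  have "bind (gauss_vec \<mu> S) (\<lambda>e. gauss_vec (m + g *\<^sub>R e) D)
      = bind std_gaussian (\<lambda>x. distr std_gaussian borel (\<lambda>z. m + g *\<^sub>R (\<mu> + A *v x) + B *v z))"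
    unfolding gauss_vec_eq_distr[of \<mu>] A_def B_def
    by (subst bind_distr[where K=borel]) (auto simp: prob_space.not_empty prob_space_std_gaussian gauss_vec_eq_distr[symmetric]
        gauss_vec_affine_kernel_measurable)
  also have "\<dots> = distr (std_gaussian \<Otimes>\<^sub>M std_gaussian) borel
      (\<lambda>(x, z). (m + g *\<^sub>R \<mu>) + g *\<^sub>R (A *v x) + B *v z)"
    by (subst bind_distr_eq_distr_pair) (simp_all add: prob_space_std_gaussian algebra_simps)
  also have "\<dots> = gauss_vec (m + g *\<^sub>R \<mu>) (g\<^sup>2 *\<^sub>R S + D)"
    using assms by (simp add: distr_std_gaussian_pair_affine A_def B_def cov_factor)
  finally show ?thesis .
qed

section \<open>Mixtures\<close>

definition categorical :: "nat \<Rightarrow> (nat \<Rightarrow> real) \<Rightarrow> nat measure"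
  where "categorical K \<pi> = density (count_space {1..K}) (\<lambda>k. ennreal (\<pi> k))"

lemma measurable_categorical_iff: "f \<in> categorical K \<pi> \<rightarrow>\<^sub>M N \<longleftrightarrow> f \<in> {1..K} \<rightarrow> space N"
proof -
  have "measurable (categorical K \<pi>) N = measurable (count_space {1..K}) N"
    unfolding categorical_def by (rule measurable_cong_sets) simp_all
  then show ?thesis by (simp add: measurable_count_space_eq1)
qed

lemma mixture_cong:
  assumes "\<And>k. k \<in> {1..K} \<Longrightarrow> M k = M' k"
  shows "mixture K \<pi> M = mixture K \<pi> M'"
  unfolding mixture_def using assms by (metis (no_types, lifting) sum.cong)

lemma mixture_eq_bind:
  fixes M :: "nat \<Rightarrow> (real^'n) measure"
  assumes K: "1 \<le> K" and M: "\<And>k. k \<in> {1..K} \<Longrightarrow> M k \<in> space (subprob_algebra borel)"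
  shows "mixture K \<pi> M = bind (categorical K \<pi>) M"
proof -
  have nonempty: "space (categorical K \<pi>) \<noteq> {}"
    using K by (auto simp: categorical_def)
  have kernel: "M \<in> categorical K \<pi> \<rightarrow>\<^sub>M subprob_algebra borel"
    using M by (simp add: measurable_categorical_iff)
  have sets_bind: "sets (bind (categorical K \<pi>) M) = sets borel"
    by (rule sets_bind[OF sets_kernel[OF kernel] nonempty])
  have emeasure_bind: "emeasure (bind (categorical K \<pi>) M) A = (\<Sum>k=1..K. ennreal (\<pi> k) * emeasure (M k) A)"
    if "A \<in> sets borel" for A
  proof -
    have "emeasure (bind (categorical K \<pi>) M) A = (\<integral>\<^sup>+k. emeasure (M k) A \<partial>categorical K \<pi>)"
      using that by (rule emeasure_bind[OF nonempty kernel])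
    also have "\<dots> = (\<integral>\<^sup>+k. ennreal (\<pi> k) * emeasure (M k) A \<partial>count_space {1..K})"
      unfolding categorical_def by (subst nn_integral_density) auto
    also have "\<dots> = (\<Sum>k=1..K. ennreal (\<pi> k) * emeasure (M k) A)"
      by (rule nn_integral_count_space_finite) simp
    finally show ?thesis .
  qed
  have "mixture K \<pi> M = measure_of UNIV (sets borel) (emeasure (bind (categorical K \<pi>) M))"
    unfolding mixture_def
  proof (rule measure_of_eq)
    fix A :: "(real^'n) set" assume "A \<in> sigma_sets UNIV (sets borel)"
    then have "A \<in> sets borel"
      by (metis sets.sigma_sets_eq space_borel)
    then show "(\<Sum>k=1..K. ennreal (\<pi> k) * emeasure (M k) A) = emeasure (bind (categorical K \<pi>) M) A"
      by (simp add: emeasure_bind)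
  qed simp
  also have "\<dots> = bind (categorical K \<pi>) M"
    using measure_of_of_measure[of "bind (categorical K \<pi>) M"] sets_bind
    by (simp add: sets_eq_imp_space_eq[OF sets_bind])
  finally show ?thesis .
qed

lemma bind_mixture:
  fixes M :: "nat \<Rightarrow> (real^'n) measure" and N :: "real^'n \<Rightarrow> (real^'m) measure"
  assumes K: "1 \<le> K" and M: "\<And>k. k \<in> {1..K} \<Longrightarrow> M k \<in> space (subprob_algebra borel)"
    and N: "N \<in> borel \<rightarrow>\<^sub>M subprob_algebra borel"
  shows "bind (mixture K \<pi> M) N = mixture K \<pi> (\<lambda>k. bind (M k) N)"
proof -
  have "bind (M k) N \<in> space (subprob_algebra borel)" if "k \<in> {1..K}" for k
  proof -
    have sub: "subprob_space (M k)" and sets: "sets (M k) = sets borel"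
      using M[OF that] by (auto simp: space_subprob_algebra)
    have "N \<in> M k \<rightarrow>\<^sub>M subprob_algebra borel"
      using N by (simp add: measurable_cong_sets[OF sets refl])
    then show ?thesis
      by (rule subprob_space.bind_in_space[OF sub])
  qed
  note bind_in_space = this
  have kernel: "M \<in> categorical K \<pi> \<rightarrow>\<^sub>M subprob_algebra borel"
    using M by (simp add: measurable_categorical_iff)
  have "bind (mixture K \<pi> M) N = bind (bind (categorical K \<pi>) M) N"
    by (simp only: mixture_eq_bind[OF K M])
  also have "\<dots> = bind (categorical K \<pi>) (\<lambda>k. bind (M k) N)"
    by (rule bind_assoc[OF kernel N])
  also have "\<dots> = mixture K \<pi> (\<lambda>k. bind (M k) N)"
    by (rule mixture_eq_bind[OF K bind_in_space, symmetric])
  finally show ?thesis .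
qed

lemma bind_mixture_gauss_vec_affine:
  assumes K: "1 \<le> K" and S: "\<And>k. k \<in> {1..K} \<Longrightarrow> psd (S k)" and D: "psd D"
  shows "bind (mixture K \<pi> (\<lambda>k. gauss_vec (\<mu> k) (S k))) (\<lambda>e. gauss_vec (m + g *\<^sub>R e) D)
    = mixture K \<pi> (\<lambda>k. gauss_vec (m + g *\<^sub>R \<mu> k) (g\<^sup>2 *\<^sub>R S k + D))"
proof -
  have "bind (mixture K \<pi> (\<lambda>k. gauss_vec (\<mu> k) (S k))) (\<lambda>e. gauss_vec (m + g *\<^sub>R e) D)
      = mixture K \<pi> (\<lambda>k. bind (gauss_vec (\<mu> k) (S k)) (\<lambda>e. gauss_vec (m + g *\<^sub>R e) D))"
    by (rule bind_mixture[OF K gauss_vec_in_subprob_algebra gauss_vec_affine_kernel_measurable])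
  also have "\<dots> = mixture K \<pi> (\<lambda>k. gauss_vec (m + g *\<^sub>R \<mu> k) (g\<^sup>2 *\<^sub>R S k + D))"
    by (rule mixture_cong) (simp add: bind_gauss_vec_affine S D)
  finally show ?thesis .
qed

section \<open>The DDIM reverse step\<close>

lemma alpha_bar_step: "1 \<le> t \<Longrightarrow> alpha_bar \<beta> t = alpha \<beta> t * alpha_bar \<beta> (t - 1)"
  by (cases t) (simp_all add: alpha_bar_def prod.cl_ivl_Suc mult.commute)

lemma alpha_bar_pos: "(\<And>i. i \<in> {1..t} \<Longrightarrow> \<beta> i < 1) \<Longrightarrow> 0 < alpha_bar \<beta> t"
  unfolding alpha_bar_def alpha_def by (rule prod_pos) simp

lemma alpha_bar_less_1:
  assumes t: "1 \<le> t" and \<beta>: "\<And>i. i \<in> {1..t} \<Longrightarrow> 0 < \<beta> i \<and> \<beta> i < 1"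
  shows "alpha_bar \<beta> t < 1"
proof -
  have "alpha_bar \<beta> (t - 1) \<le> 1"
    unfolding alpha_bar_def alpha_def using \<beta> by (intro prod_le_1) fastforce+
  moreover have "0 < alpha \<beta> t" "alpha \<beta> t < 1"
    using \<beta>[of t] t by (auto simp: alpha_def)
  ultimately have "alpha \<beta> t * alpha_bar \<beta> (t - 1) < 1"
    using mult_left_le[of "alpha_bar \<beta> (t - 1)" "alpha \<beta> t"] by linarith
  then show ?thesis
    by (simp add: alpha_bar_step[OF t])
qed

lemma x0_prediction_rescale:
  fixes x e :: "'a::real_vector"
  assumes "0 < a" "0 < a'"
  shows "sqrt a' *\<^sub>R ((1 / sqrt (a * a')) *\<^sub>R (x - s *\<^sub>R e)) + L *\<^sub>R e
    = (1 / sqrt a) *\<^sub>R x + (L - s / sqrt a) *\<^sub>R e"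
proof -
  have "sqrt a' / sqrt (a * a') = 1 / sqrt a" "s * sqrt a' / sqrt (a * a') = s / sqrt a"
    using assms by (simp_all add: real_sqrt_mult)
  then show ?thesis
    by (simp add: algebra_simps)
qed

lemma noise_from_x0_prediction:
  fixes x e :: "'a::real_vector"
  assumes "0 < a" "a < 1"
  shows "(1 / sqrt (1 - a)) *\<^sub>R (x - sqrt a *\<^sub>R ((1 / sqrt a) *\<^sub>R (x - sqrt (1 - a) *\<^sub>R e))) = e"
  using assms by simp


lemma ddim_cond_noise_param:
  assumes t: "1 \<le> t" and \<beta>: "\<And>i. i \<in> {1..t} \<Longrightarrow> 0 < \<beta> i \<and> \<beta> i < 1"
  shows "ddim_cond \<beta> \<sigma> t xt ((1 / sqrt (alpha_bar \<beta> t)) *\<^sub>R (xt - sqrt (1 - alpha_bar \<beta> t) *\<^sub>R e))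
    = gauss_vec ((1 / sqrt (alpha \<beta> t)) *\<^sub>R xt
        + (sqrt (1 - alpha_bar \<beta> (t - 1) - (\<sigma> t)\<^sup>2) - sqrt (1 - alpha_bar \<beta> t) / sqrt (alpha \<beta> t)) *\<^sub>R e)
      ((\<sigma> t)\<^sup>2 *\<^sub>R mat 1)"
proof -
  have "0 < alpha \<beta> t" "0 < alpha_bar \<beta> (t - 1)"
    using \<beta> t by (auto simp: alpha_def intro!: alpha_bar_pos)
  moreover have "0 < alpha_bar \<beta> t" "alpha_bar \<beta> t < 1"
    using \<beta> t by (auto intro: alpha_bar_pos alpha_bar_less_1)
  ultimately show ?thesis
    unfolding ddim_cond_def
    by (simp only: noise_from_x0_prediction alpha_bar_step[OF t] x0_prediction_rescale)
qed

theorem theorem1: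
  fixes T t K :: nat and \<beta> \<sigma> \<pi> :: "nat \<Rightarrow> real"
    and xt :: "real^'n"
    and mu :: "nat \<Rightarrow> real^'n \<Rightarrow> nat \<Rightarrow> real^'n"
    and Sig :: "nat \<Rightarrow> real^'n \<Rightarrow> nat \<Rightarrow> real^'n^'n"
  assumes beta: "\<forall>i\<in>{1..T}. 0 < \<beta> i \<and> \<beta> i < 1"
    and sigma_nonneg: "\<sigma> t \<ge> 0"
    and sigma_bound: "1 - alpha_bar \<beta> (t-1) - (\<sigma> t)\<^sup>2 \<ge> 0"
    and t_range: "t \<in> {2..T}"
    and pi_range: "\<forall>k\<in>{1..K}. 0 \<le> \<pi> k \<and> \<pi> k \<le> 1"
    and pi_sum: "(\<Sum>k=1..K. \<pi> k) = 1"
    and Sig_psd: "\<forall>k\<in>{1..K}. psd (Sig k xt t)"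
  shows
    "(let p_eps = mixture K \<pi> (\<lambda>k. gauss_vec (mu k xt t) (Sig k xt t));
          lam = sqrt (1 - alpha_bar \<beta> (t-1) - (\<sigma> t)\<^sup>2);
          gam = lam - sqrt (1 - alpha_bar \<beta> t) / sqrt (alpha \<beta> t);
          x0hat = (\<lambda>k. (1 / sqrt (alpha_bar \<beta> t)) *\<^sub>R (xt - sqrt (1 - alpha_bar \<beta> t) *\<^sub>R mu k xt t))
      in bind p_eps (\<lambda>eps. ddim_cond \<beta> \<sigma> t xt
             ((1 / sqrt (alpha_bar \<beta> t)) *\<^sub>R (xt - sqrt (1 - alpha_bar \<beta> t) *\<^sub>R eps)))
         = mixture K \<pi> (\<lambda>k. gauss_vec
             (sqrt (alpha_bar \<beta> (t-1)) *\<^sub>R x0hat k + lam *\<^sub>R mu k xt t)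
             (gam\<^sup>2 *\<^sub>R Sig k xt t + (\<sigma> t)\<^sup>2 *\<^sub>R mat 1)))"
proof -
  have t: "1 \<le> t" and \<beta>: "\<And>i. i \<in> {1..t} \<Longrightarrow> 0 < \<beta> i \<and> \<beta> i < 1"
    using t_range beta by auto
  have K: "1 \<le> K"
    using pi_sum by (cases K) auto
  have "0 < alpha \<beta> t" "0 < alpha_bar \<beta> (t - 1)"
    using \<beta> t by (auto simp: alpha_def intro!: alpha_bar_pos)
  then have x0hat_mean: "sqrt (alpha_bar \<beta> (t - 1)) *\<^sub>R ((1 / sqrt (alpha_bar \<beta> t)) *\<^sub>R (xt - s *\<^sub>R m)) + L *\<^sub>R m
      = (1 / sqrt (alpha \<beta> t)) *\<^sub>R xt + (L - s / sqrt (alpha \<beta> t)) *\<^sub>R m" for s L and m :: "real^'n"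
    by (simp only: alpha_bar_step[OF t] x0_prediction_rescale)
  show ?thesis
    using Sig_psd sigma_nonneg
    by (simp only: Let_def ddim_cond_noise_param[OF t \<beta>] x0hat_mean)
      (intro bind_mixture_gauss_vec_affine K psd_scaleR_mat_1; simp)
qed

end
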